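(* Let $\ket\psi$ be the output state of a $t$-doped Clifford circuit on $n$ qubits. Then the stabilizer dimension of $\ket\psi$ is at least $n-2t$.
   Context: A $t$-doped Clifford circuit starts in $\ket{0^n}$ and consists of Clifford gates (Hadamard, Phase, CNOT) and at most $t$ single-qubit non-Clifford gates. For $x=(a,b)\in\mathbb F_2^{2n}$, $W_x = i^{a\cdot b}X^{a_1}Z^{b_1}\otimes\cdots\otimes X^{a_n}Z^{b_n}$ ($a\cdot b$ over the integers). $\mathrm{Weyl}(\ket\psi)=\{x\in\mathbb F_2^{2n}:W_x\ket\psi=\pm\ket\psi\}$ is a subspace of $\mathbb F_2^{2n}$, and the stabilizer dimension of $\ket\psi$ is its dimension. *)

theory Defs
  imports "HOL-Analysis.Analysis" "HOL-Library.Z2"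
begin

text \<open>Qubits are indexed by a finite type 'n (so n = CARD('n)).
  An n-qubit state is a function from computational basis strings ('n \<Rightarrow> bool)
  to complex amplitudes.\<close>

type_synonym 'n state = "('n \<Rightarrow> bool) \<Rightarrow> complex"

text \<open>Gates: Hadamard, Phase, CNOT (control, target), and an arbitrary
  single-qubit gate given by its 2x2 matrix (row index = output bit).\<close>
datatype 'n gate = Hg 'n | Sg 'n | CNOTg 'n 'n | Ug 'n "bool \<Rightarrow> bool \<Rightarrow> complex"

definition unitary2 :: "(bool \<Rightarrow> bool \<Rightarrow> complex) \<Rightarrow> bool" where
  "unitary2 U \<longleftrightarrow> (\<forall>b b'. (\<Sum>c\<in>UNIV. cnj (U c b) * U c b') = (if b = b' then 1 else 0))"

fun valid_gate :: "'n gate \<Rightarrow> bool" where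
  "valid_gate (CNOTg c t) = (c \<noteq> t)"
| "valid_gate (Ug j U) = unitary2 U"
| "valid_gate _ = True"

fun is_nonclifford_slot :: "'n gate \<Rightarrow> bool" where
  "is_nonclifford_slot (Ug j U) = True"
| "is_nonclifford_slot _ = False"

fun apply_gate :: "'n gate \<Rightarrow> 'n state \<Rightarrow> 'n state" where
  "apply_gate (Hg j) \<psi> = (\<lambda>x. (\<psi> (x(j := False)) + (if x j then -1 else 1) * \<psi> (x(j := True)))
                                 / complex_of_real (sqrt 2))"
| "apply_gate (Sg j) \<psi> = (\<lambda>x. (if x j then \<i> else 1) * \<psi> x)"
| "apply_gate (CNOTg c t) \<psi> = (\<lambda>x. \<psi> (x(t := (x t \<noteq> x c))))"
| "apply_gate (Ug j U) \<psi> = (\<lambda>x. \<Sum>b\<in>UNIV. U (x j) b * \<psi> (x(j := b)))"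

definition zero_state :: "'n state" where
  "zero_state = (\<lambda>x. if x = (\<lambda>_. False) then 1 else 0)"

definition run_circuit :: "'n gate list \<Rightarrow> 'n state" where
  "run_circuit gs = foldl (\<lambda>\<psi> g. apply_gate g \<psi>) zero_state gs"

definition t_doped_clifford :: "nat \<Rightarrow> 'n gate list \<Rightarrow> bool" where
  "t_doped_clifford t gs \<longleftrightarrow> (\<forall>g\<in>set gs. valid_gate g) \<and> length (filter is_nonclifford_slot gs) \<le> t"

text \<open>F_2^{2n} = bit ^ ('n + 'n); for x, a_j = x $ Inl j and b_j = x $ Inr j.\<close>
definition weyl_op :: "bit ^ ('n::finite + 'n) \<Rightarrow> 'n state \<Rightarrow> 'n state" where
  "weyl_op v \<psi> = (\<lambda>z.
     let a = (\<lambda>j. v $ Inl j = 1); b = (\<lambda>j. v $ Inr j = 1);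
         y = (\<lambda>j. z j \<noteq> a j)
     in \<i> ^ card {j. a j \<and> b j} * (-1) ^ card {j. b j \<and> y j} * \<psi> y)"

definition Weyl :: "('n::finite) state \<Rightarrow> (bit ^ ('n + 'n)) set" where
  "Weyl \<psi> = {v. weyl_op v \<psi> = \<psi> \<or> weyl_op v \<psi> = (\<lambda>z. - \<psi> z)}"

definition stab_dim :: "('n::finite) state \<Rightarrow> nat" where
  "stab_dim \<psi> = vec.dim (Weyl \<psi>)"

end

theory Submission
  imports Defs
begin

(* A Clifford gate G acts on Weyl operators through an invertible linear map L of F_2^(2n):
   W_(L x) G = +-G W_x. Hence G maps every subspace of Weyl(psi) onto a subspace of Weyl(G psi)
   of the same dimension. A single-qubit gate on qubit j commutes with every W_x acting
   trivially on qubit j; these x form a subspace of codimension 2, so such a gate loses at most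
   two dimensions. Starting from the n-dimensional space of Z-type operators stabilizing
   |0^n>, the bound n - 2t follows. *)

lemma dim_coordinate_subspace:
  "card (UNIV - A) \<le> vec.dim {v :: 'a::field ^ 'm::finite. \<forall>k\<in>A. v $ k = 0}"
proof -
  let ?B = "(\<lambda>k. axis k (1::'a)) ` (UNIV - A)"
  let ?V = "{v :: 'a ^ 'm. \<forall>k\<in>A. v $ k = 0}"
  have indep: "vec.independent ?B"
    by (rule vec.independent_mono[OF vec.independent_Basis]) (auto simp: cart_basis_def)
  have "?B \<subseteq> ?V"
    by (auto simp: axis_def)
  then have "card ?B \<le> vec.dim ?V"
    using indep by (rule vec.independent_card_le_dim)
  moreover have "card ?B = card (UNIV - A)"
    by (rule card_image) (auto simp: inj_on_def axis_eq_axis)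
  ultimately show ?thesis by simp
qed

lemma dim_Int_ge:
  fixes S T :: "('a::field ^ 'm::finite) set"
  assumes "vec.subspace S" "vec.subspace T"
  shows "vec.dim S + vec.dim T \<le> vec.dim (S \<inter> T) + CARD('m)"
proof -
  have "vec.dim {x + y |x y. x \<in> S \<and> y \<in> T} \<le> vec.dim (UNIV :: ('a ^ 'm) set)"
    by (rule vec.dim_subset) simp
  also have "\<dots> = CARD('m)"
    by (rule vec_dim_card)
  finally have "vec.dim {x + y |x y. x \<in> S \<and> y \<in> T} \<le> CARD('m)" .
  with vec.dim_sums_Int[OF assms] show ?thesis by linarith
qed

lemma bit_add_add_self: "(x::bit) + y + y = x"
  by (simp add: add.assoc flip: mult_2 del: add_bit_eq_xor)

lemma bit_add_eq_1_iff: "(x::bit) + y = 1 \<longleftrightarrow> (x = 1) \<noteq> (y = 1)"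
  by (cases x; cases y) auto

definition xbits :: "bit ^ ('n::finite + 'n) \<Rightarrow> 'n \<Rightarrow> bool" where
  "xbits v j \<longleftrightarrow> v $ Inl j = 1"

definition zbits :: "bit ^ ('n::finite + 'n) \<Rightarrow> 'n \<Rightarrow> bool" where
  "zbits v j \<longleftrightarrow> v $ Inr j = 1"

(* On a single qubit, (i^(ab) X^a Z^b psi)(z) = i^(ab) (-1)^(b y) psi(y) with y = z + a;
   the phase of an n-qubit Weyl operator is the product of these factors. *)
definition pauli_phase :: "bool \<Rightarrow> bool \<Rightarrow> bool \<Rightarrow> complex" where
  "pauli_phase a b y = (if a \<and> b then \<i> else 1) * (if b \<and> y then -1 else 1)"

definition pauli_phase_prod ::
    "'n set \<Rightarrow> ('n \<Rightarrow> bool) \<Rightarrow> ('n \<Rightarrow> bool) \<Rightarrow> ('n \<Rightarrow> bool) \<Rightarrow> complex" where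
  "pauli_phase_prod A a b y = (\<Prod>k\<in>A. pauli_phase (a k) (b k) (y k))"

lemma pauli_phase_prod_fun_upd [simp]:
  assumes "j \<notin> A"
  shows "pauli_phase_prod A (a(j := p)) b y = pauli_phase_prod A a b y"
    and "pauli_phase_prod A a (b(j := p)) y = pauli_phase_prod A a b y"
    and "pauli_phase_prod A a b (y(j := p)) = pauli_phase_prod A a b y"
  using assms unfolding pauli_phase_prod_def by (auto intro!: prod.cong)

lemma pauli_phase_prod_remove:
  "finite A \<Longrightarrow> j \<in> A \<Longrightarrow>
    pauli_phase_prod A a b y = pauli_phase (a j) (b j) (y j) * pauli_phase_prod (A - {j}) a b y"
  unfolding pauli_phase_prod_def by (rule prod.remove)

lemma weyl_op_eq_pauli_phase_prod:
  "weyl_op v \<psi> z = pauli_phase_prod UNIV (xbits v) (zbits v) (\<lambda>j. z j \<noteq> xbits v j)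
     * \<psi> (\<lambda>j. z j \<noteq> xbits v j)"
proof -
  have power_card: "c ^ card {j. P j} = (\<Prod>j\<in>UNIV. if P j then c else 1)" for c :: complex
    and P :: "'a \<Rightarrow> bool"
    by (simp add: prod.If_cases Collect_conv_if)
  show ?thesis
    unfolding weyl_op_def Let_def pauli_phase_prod_def pauli_phase_def xbits_def zbits_def
    by (simp add: power_card prod.distrib)
qed

lemma weyl_op_fun_upd:
  assumes "\<And>k. k \<noteq> j \<Longrightarrow> a k = xbits v k"
  shows "weyl_op v \<psi> (z(j := c)) =
    pauli_phase (xbits v j) (zbits v j) (c \<noteq> xbits v j)
    * pauli_phase_prod (UNIV - {j}) (xbits v) (zbits v) (\<lambda>k. z k \<noteq> a k)
    * \<psi> ((\<lambda>k. z k \<noteq> a k)(j := c \<noteq> xbits v j))"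
proof -
  have "(\<lambda>k. (z(j := c)) k \<noteq> xbits v k) = (\<lambda>k. z k \<noteq> a k)(j := c \<noteq> xbits v j)"
    using assms by (auto simp: fun_eq_iff)
  then show ?thesis
    by (simp add: weyl_op_eq_pauli_phase_prod pauli_phase_prod_remove[of UNIV j])
qed

lemma apply_gate_uminus: "apply_gate g (\<lambda>z. - \<phi> z) = (\<lambda>z. - apply_gate g \<phi> z)"
  by (cases g) (auto simp: fun_eq_iff algebra_simps sum_negf diff_divide_distrib add_divide_distrib)

definition hadamard_symplectic :: "'n::finite \<Rightarrow> bit ^ ('n + 'n) \<Rightarrow> bit ^ ('n + 'n)" where
  "hadamard_symplectic j v =
     (\<chi> k. if k = Inl j then v $ Inr j else if k = Inr j then v $ Inl j else v $ k)"

definition phase_symplectic :: "'n::finite \<Rightarrow> bit ^ ('n + 'n) \<Rightarrow> bit ^ ('n + 'n)" where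
  "phase_symplectic j v = (\<chi> k. if k = Inr j then v $ Inr j + v $ Inl j else v $ k)"

definition cnot_symplectic :: "'n::finite \<Rightarrow> 'n \<Rightarrow> bit ^ ('n + 'n) \<Rightarrow> bit ^ ('n + 'n)" where
  "cnot_symplectic c t v =
     (\<chi> k. if k = Inl t then v $ Inl t + v $ Inl c
           else if k = Inr c then v $ Inr c + v $ Inr t else v $ k)"

lemma linear_hadamard_symplectic: "Vector_Spaces.linear (*s) (*s) (hadamard_symplectic j)"
  unfolding Vector_Spaces.linear_iff
  by (auto simp: vec.vector_space_axioms vec_eq_iff hadamard_symplectic_def
      simp del: add_bit_eq_xor mult_bit_eq_and)

lemma linear_phase_symplectic: "Vector_Spaces.linear (*s) (*s) (phase_symplectic j)"
  unfolding Vector_Spaces.linear_iff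
  by (auto simp: vec.vector_space_axioms vec_eq_iff phase_symplectic_def algebra_simps
      simp del: add_bit_eq_xor mult_bit_eq_and)

lemma linear_cnot_symplectic: "Vector_Spaces.linear (*s) (*s) (cnot_symplectic c t)"
  unfolding Vector_Spaces.linear_iff
  by (auto simp: vec.vector_space_axioms vec_eq_iff cnot_symplectic_def algebra_simps
      simp del: add_bit_eq_xor mult_bit_eq_and)

lemma inj_hadamard_symplectic: "inj (hadamard_symplectic j)"
  by (rule inj_on_inverseI[where g = "hadamard_symplectic j"]) (simp add: vec_eq_iff hadamard_symplectic_def)

lemma inj_phase_symplectic: "inj (phase_symplectic j)"
  by (rule inj_on_inverseI[where g = "phase_symplectic j"])
    (simp add: vec_eq_iff phase_symplectic_def bit_add_add_self del: add_bit_eq_xor)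

lemma inj_cnot_symplectic: "c \<noteq> t \<Longrightarrow> inj (cnot_symplectic c t)"
  by (rule inj_on_inverseI[where g = "cnot_symplectic c t"])
    (simp add: vec_eq_iff cnot_symplectic_def bit_add_add_self del: add_bit_eq_xor)

lemma xbits_hadamard_symplectic: "xbits (hadamard_symplectic j v) = (xbits v)(j := zbits v j)"
  and zbits_hadamard_symplectic: "zbits (hadamard_symplectic j v) = (zbits v)(j := xbits v j)"
  by (simp_all add: fun_eq_iff xbits_def zbits_def hadamard_symplectic_def)

lemma xbits_phase_symplectic: "xbits (phase_symplectic j v) = xbits v"
  and zbits_phase_symplectic: "zbits (phase_symplectic j v) = (zbits v)(j := zbits v j \<noteq> xbits v j)"
  by (simp_all add: fun_eq_iff xbits_def zbits_def phase_symplectic_def bit_add_eq_1_iff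
      del: add_bit_eq_xor)

lemma xbits_cnot_symplectic: "xbits (cnot_symplectic c t v) = (xbits v)(t := xbits v t \<noteq> xbits v c)"
  and zbits_cnot_symplectic: "zbits (cnot_symplectic c t v) = (zbits v)(c := zbits v c \<noteq> zbits v t)"
  by (simp_all add: fun_eq_iff xbits_def zbits_def cnot_symplectic_def bit_add_eq_1_iff
      del: add_bit_eq_xor)

(* H W_(a,b) H = (-1)^(ab) W_(b,a) on one qubit, with R standing for the phase contributed
   by the other qubits and s for sqrt 2. *)
lemma pauli_phase_hadamard:
  "pauli_phase b a (z \<noteq> b) * R * ((g False + (if z \<noteq> b then -1 else 1) * g True) / s) =
     (if a \<and> b then -1 else 1) *
     ((pauli_phase a b (False \<noteq> a) * R * g (False \<noteq> a)
       + (if z then -1 else 1) * (pauli_phase a b (True \<noteq> a) * R * g (True \<noteq> a))) / s)"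
  by (cases a; cases b; cases z) (simp_all add: pauli_phase_def algebra_simps add_divide_distrib)

lemma pauli_phase_phase:
  "pauli_phase a (b \<noteq> a) y * (if y then \<i> else 1) =
     (if a \<and> b then -1 else 1) * ((if y \<noteq> a then \<i> else 1) * pauli_phase a b y)"
  by (cases a; cases b; cases y) (simp_all add: pauli_phase_def)

lemma pauli_phase_cnot:
  "pauli_phase a1 (b1 \<noteq> b2) y1 * pauli_phase (a2 \<noteq> a1) b2 y2 =
     (if a1 \<and> b2 \<and> a2 = b1 then -1 else 1) * (pauli_phase a1 b1 y1 * pauli_phase a2 b2 (y2 \<noteq> y1))"
  by (cases a1; cases b1; cases a2; cases b2; cases y1; cases y2) (simp_all add: pauli_phase_def)

lemma weyl_op_hadamard:
  "weyl_op (hadamard_symplectic j v) (apply_gate (Hg j) \<psi>) =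
     (\<lambda>z. (if xbits v j \<and> zbits v j then -1 else 1) * apply_gate (Hg j) (weyl_op v \<psi>) z)"
proof
  fix z
  define a b where "a = xbits v" and "b = zbits v"
  define y where "y = (\<lambda>k. z k \<noteq> (a(j := b j)) k)"
  define R where "R = pauli_phase_prod (UNIV - {j}) a b y"
  have lhs: "weyl_op (hadamard_symplectic j v) (apply_gate (Hg j) \<psi>) z =
      pauli_phase (b j) (a j) (y j) * R * apply_gate (Hg j) \<psi> y"
    unfolding weyl_op_eq_pauli_phase_prod xbits_hadamard_symplectic zbits_hadamard_symplectic
    by (simp add: pauli_phase_prod_remove[of UNIV j] R_def y_def a_def b_def)
  have rhs: "weyl_op v \<psi> (z(j := c)) = pauli_phase (a j) (b j) (c \<noteq> a j) * R * \<psi> (y(j := c \<noteq> a j))"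
    for c unfolding R_def y_def a_def b_def by (rule weyl_op_fun_upd) simp
  have yj: "y j = (z j \<noteq> b j)"
    by (simp add: y_def)
  show "weyl_op (hadamard_symplectic j v) (apply_gate (Hg j) \<psi>) z =
      (if xbits v j \<and> zbits v j then -1 else 1) * apply_gate (Hg j) (weyl_op v \<psi>) z"
    unfolding lhs unfolding apply_gate.simps rhs a_def[symmetric] b_def[symmetric] unfolding yj
    by (rule pauli_phase_hadamard[of "b j" "a j" "z j" R "\<lambda>c. \<psi> (y(j := c))"])
qed

lemma weyl_op_phase:
  "weyl_op (phase_symplectic j v) (apply_gate (Sg j) \<psi>) =
     (\<lambda>z. (if xbits v j \<and> zbits v j then -1 else 1) * apply_gate (Sg j) (weyl_op v \<psi>) z)"
proof
  fix z
  define a b where "a = xbits v" and "b = zbits v"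
  define y where "y = (\<lambda>k. z k \<noteq> a k)"
  define R where "R = pauli_phase_prod (UNIV - {j}) a b y"
  have lhs: "weyl_op (phase_symplectic j v) (apply_gate (Sg j) \<psi>) z =
      pauli_phase (a j) (b j \<noteq> a j) (y j) * (if y j then \<i> else 1) * R * \<psi> y"
    unfolding weyl_op_eq_pauli_phase_prod xbits_phase_symplectic zbits_phase_symplectic
    by (simp add: pauli_phase_prod_remove[of UNIV j] R_def y_def a_def b_def)
  have rhs: "weyl_op v \<psi> z = pauli_phase (a j) (b j) (y j) * R * \<psi> y"
    unfolding weyl_op_eq_pauli_phase_prod
    by (simp add: pauli_phase_prod_remove[of UNIV j] R_def y_def a_def b_def)
  have "z j = (y j \<noteq> a j)"
    by (auto simp: y_def)
  then show "weyl_op (phase_symplectic j v) (apply_gate (Sg j) \<psi>) z =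
      (if xbits v j \<and> zbits v j then -1 else 1) * apply_gate (Sg j) (weyl_op v \<psi>) z"
    unfolding lhs pauli_phase_phase unfolding apply_gate.simps rhs a_def[symmetric] b_def[symmetric]
    by (simp only: mult.assoc)
qed

lemma weyl_op_cnot:
  assumes "c \<noteq> t"
  shows "weyl_op (cnot_symplectic c t v) (apply_gate (CNOTg c t) \<psi>) =
     (\<lambda>z. (if xbits v c \<and> zbits v t \<and> xbits v t = zbits v c then -1 else 1)
          * apply_gate (CNOTg c t) (weyl_op v \<psi>) z)"
proof
  fix z
  define a b where "a = xbits v" and "b = zbits v"
  define y where "y = (\<lambda>k. z k \<noteq> (a(t := a t \<noteq> a c)) k)"
  define R where "R = pauli_phase_prod (UNIV - {c} - {t}) a b y"
  have split: "pauli_phase_prod UNIV a' b' y' =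
      pauli_phase (a' c) (b' c) (y' c) * pauli_phase (a' t) (b' t) (y' t)
      * pauli_phase_prod (UNIV - {c} - {t}) a' b' y'" for a' b' y'
    using assms by (simp add: pauli_phase_prod_remove[of UNIV c] pauli_phase_prod_remove[of "UNIV - {c}" t])
  have lhs: "weyl_op (cnot_symplectic c t v) (apply_gate (CNOTg c t) \<psi>) z =
      pauli_phase (a c) (b c \<noteq> b t) (y c) * pauli_phase (a t \<noteq> a c) (b t) (y t) * R
      * \<psi> (y(t := y t \<noteq> y c))"
    unfolding weyl_op_eq_pauli_phase_prod xbits_cnot_symplectic zbits_cnot_symplectic split
    using assms by (simp add: R_def y_def a_def b_def)
  have shift: "(\<lambda>k. (z(t := z t \<noteq> z c)) k \<noteq> a k) = y(t := y t \<noteq> y c)"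
    using assms by (auto simp: y_def fun_eq_iff)
  have rhs: "weyl_op v \<psi> (z(t := z t \<noteq> z c)) =
      pauli_phase (a c) (b c) (y c) * pauli_phase (a t) (b t) (y t \<noteq> y c) * R
      * \<psi> (y(t := y t \<noteq> y c))"
    unfolding weyl_op_eq_pauli_phase_prod a_def[symmetric] b_def[symmetric]
    unfolding shift split using assms by (simp add: R_def)
  show "weyl_op (cnot_symplectic c t v) (apply_gate (CNOTg c t) \<psi>) z =
      (if xbits v c \<and> zbits v t \<and> xbits v t = zbits v c then -1 else 1)
      * apply_gate (CNOTg c t) (weyl_op v \<psi>) z"
    unfolding lhs pauli_phase_cnot unfolding apply_gate.simps rhs a_def[symmetric] b_def[symmetric]
    by (simp only: mult.assoc)
qed

definition trivial_at :: "'n::finite \<Rightarrow> (bit ^ ('n + 'n)) set" where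
  "trivial_at j = {v. v $ Inl j = 0 \<and> v $ Inr j = 0}"

lemma subspace_trivial_at: "vec.subspace (trivial_at j)"
  by (auto simp: vec.subspace_def trivial_at_def)

lemma dim_Int_trivial_at:
  fixes j :: "'n::finite"
  assumes "vec.subspace S"
  shows "vec.dim S \<le> vec.dim (S \<inter> trivial_at j) + 2"
proof -
  have "trivial_at j = {v. \<forall>k\<in>{Inl j, Inr j}. v $ k = 0}"
    by (auto simp: trivial_at_def)
  then have "CARD('n + 'n) - 2 \<le> vec.dim (trivial_at j)"
    using dim_coordinate_subspace[of "{Inl j, Inr j}"] by (simp add: card_Diff_subset numeral_2_eq_2)
  moreover have "0 < CARD('n)"
    by simp
  then have "CARD('n + 'n) \<ge> 2"
    unfolding card_sum by linarith
  ultimately show ?thesis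
    using dim_Int_ge[OF assms subspace_trivial_at, of j] by linarith
qed

lemma weyl_op_Ug_commute:
  assumes "v \<in> trivial_at j"
  shows "weyl_op v (apply_gate (Ug j U) \<psi>) = apply_gate (Ug j U) (weyl_op v \<psi>)"
proof
  fix z
  define a b where "a = xbits v" and "b = zbits v"
  define y where "y = (\<lambda>k. z k \<noteq> a k)"
  define R where "R = pauli_phase_prod (UNIV - {j}) a b y"
  have ab: "\<not> a j" "\<not> b j"
    using assms by (auto simp: trivial_at_def a_def b_def xbits_def zbits_def)
  then have "weyl_op v (apply_gate (Ug j U) \<psi>) z = R * (\<Sum>c\<in>UNIV. U (z j) c * \<psi> (y(j := c)))"
    unfolding weyl_op_eq_pauli_phase_prod
    by (simp add: pauli_phase_prod_remove[of UNIV j] pauli_phase_def R_def y_def a_def b_def)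
  moreover have "weyl_op v \<psi> (z(j := c)) = R * \<psi> (y(j := c))" for c
  proof -
    have "weyl_op v \<psi> (z(j := c)) = pauli_phase (a j) (b j) (c \<noteq> a j) * R * \<psi> (y(j := c \<noteq> a j))"
      unfolding R_def y_def a_def b_def by (rule weyl_op_fun_upd) simp
    with ab show ?thesis by (simp add: pauli_phase_def)
  qed
  ultimately show "weyl_op v (apply_gate (Ug j U) \<psi>) z = apply_gate (Ug j U) (weyl_op v \<psi>) z"
    by (simp add: sum_distrib_left algebra_simps)
qed

(* Weyl psi is in fact a subspace, but the argument never needs this: it only transports
   subspaces contained in it from gate to gate. *)
definition has_weyl_subspace :: "('n::finite) state \<Rightarrow> nat \<Rightarrow> bool" where
  "has_weyl_subspace \<psi> d \<longleftrightarrow> (\<exists>S. vec.subspace S \<and> S \<subseteq> Weyl \<psi> \<and> d \<le> vec.dim S)"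

lemma stab_dim_ge_if_has_weyl_subspace: "has_weyl_subspace \<psi> d \<Longrightarrow> d \<le> stab_dim \<psi>"
  unfolding has_weyl_subspace_def stab_dim_def by (blast intro: le_trans vec.dim_subset)

lemma has_weyl_subspace_zero_state: "has_weyl_subspace (zero_state :: 'n::finite state) CARD('n)"
proof -
  let ?S = "{v :: bit ^ ('n + 'n). \<forall>k\<in>range Inl. v $ k = 0}"
  have "UNIV - range Inl = range (Inr :: 'n \<Rightarrow> 'n + 'n)"
    by (auto intro: sum.exhaust_sel)
  then have "card (UNIV - range Inl :: ('n + 'n) set) = CARD('n)"
    by (simp add: card_image)
  moreover have "card (UNIV - range Inl :: ('n + 'n) set) \<le> vec.dim ?S"
    by (rule dim_coordinate_subspace)
  ultimately have "CARD('n) \<le> vec.dim ?S"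
    by linarith
  moreover have "?S \<subseteq> Weyl zero_state"
  proof
    fix v assume "v \<in> ?S"
    then have "xbits v = (\<lambda>_. False)"
      by (auto simp: xbits_def fun_eq_iff)
    then have "weyl_op v zero_state = zero_state"
      by (auto simp: fun_eq_iff weyl_op_eq_pauli_phase_prod zero_state_def pauli_phase_prod_def
          pauli_phase_def)
    then show "v \<in> Weyl zero_state"
      by (simp add: Weyl_def)
  qed
  moreover have "vec.subspace ?S"
    by (auto simp: vec.subspace_def)
  ultimately show ?thesis
    unfolding has_weyl_subspace_def by blast
qed

lemma has_weyl_subspace_clifford:
  fixes L :: "bit ^ ('n::finite + 'n) \<Rightarrow> bit ^ ('n + 'n)"
  assumes lin: "Vector_Spaces.linear (*s) (*s) L" and "inj L"
    and conj: "\<And>v \<phi>. weyl_op (L v) (G \<phi>) = (\<lambda>z. \<sigma> v * G (weyl_op v \<phi>) z)"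
    and sign: "\<And>v. \<sigma> v = 1 \<or> \<sigma> v = -1"
    and uminus: "\<And>\<phi>. G (\<lambda>z. - \<phi> z) = (\<lambda>z. - G \<phi> z)"
    and "has_weyl_subspace \<psi> d"
  shows "has_weyl_subspace (G \<psi>) d"
proof -
  obtain S where S: "vec.subspace S" "S \<subseteq> Weyl \<psi>" "d \<le> vec.dim S"
    using \<open>has_weyl_subspace \<psi> d\<close> unfolding has_weyl_subspace_def by blast
  have "L ` S \<subseteq> Weyl (G \<psi>)"
  proof
    fix w assume "w \<in> L ` S"
    then obtain v where "v \<in> S" "w = L v"
      by blast
    then have "weyl_op v \<psi> = \<psi> \<or> weyl_op v \<psi> = (\<lambda>z. - \<psi> z)"
      using S(2) by (auto simp: Weyl_def)
    then show "w \<in> Weyl (G \<psi>)"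
      using sign[of v] \<open>w = L v\<close> by (auto simp: Weyl_def conj uminus)
  qed
  moreover have "vec.dim (L ` S) = vec.dim S"
    by (rule vec.dim_image_eq[OF lin inj_on_subset[OF \<open>inj L\<close> subset_UNIV]])
  moreover have "vec.subspace (L ` S)"
    by (rule vec.linear_subspace_image[OF lin S(1)])
  ultimately show ?thesis
    using S(3) unfolding has_weyl_subspace_def by auto
qed

lemma has_weyl_subspace_Ug:
  assumes "has_weyl_subspace \<psi> d"
  shows "has_weyl_subspace (apply_gate (Ug j U) \<psi>) (d - 2)"
proof -
  obtain S where S: "vec.subspace S" "S \<subseteq> Weyl \<psi>" "d \<le> vec.dim S"
    using assms unfolding has_weyl_subspace_def by blast
  have "S \<inter> trivial_at j \<subseteq> Weyl (apply_gate (Ug j U) \<psi>)"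
  proof
    fix v assume v: "v \<in> S \<inter> trivial_at j"
    then have "weyl_op v \<psi> = \<psi> \<or> weyl_op v \<psi> = (\<lambda>z. - \<psi> z)"
      using S(2) by (auto simp: Weyl_def)
    then show "v \<in> Weyl (apply_gate (Ug j U) \<psi>)"
      using weyl_op_Ug_commute[of v j U \<psi>] v unfolding Weyl_def
      by (auto simp: apply_gate_uminus simp del: apply_gate.simps)
  qed
  moreover have "vec.subspace (S \<inter> trivial_at j)"
    by (rule vec.subspace_inter[OF S(1) subspace_trivial_at])
  moreover have "d - 2 \<le> vec.dim (S \<inter> trivial_at j)"
    using dim_Int_trivial_at[OF S(1), of j] S(3) by linarith
  ultimately show ?thesis
    unfolding has_weyl_subspace_def by blast
qed

lemma has_weyl_subspace_apply_gate:
  assumes "valid_gate g" "has_weyl_subspace \<psi> d"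
  shows "has_weyl_subspace (apply_gate g \<psi>) (d - (if is_nonclifford_slot g then 2 else 0))"
proof (cases g)
  case (Hg j)
  have "has_weyl_subspace (apply_gate (Hg j) \<psi>) d"
    by (rule has_weyl_subspace_clifford[where G = "apply_gate (Hg j)",
          OF linear_hadamard_symplectic inj_hadamard_symplectic
          weyl_op_hadamard _ apply_gate_uminus assms(2)]) simp
  with Hg show ?thesis by simp
next
  case (Sg j)
  have "has_weyl_subspace (apply_gate (Sg j) \<psi>) d"
    by (rule has_weyl_subspace_clifford[where G = "apply_gate (Sg j)",
          OF linear_phase_symplectic inj_phase_symplectic
          weyl_op_phase _ apply_gate_uminus assms(2)]) simp
  with Sg show ?thesis by simp
next
  case (CNOTg c t)
  with assms(1) have "c \<noteq> t" by simp
  have "has_weyl_subspace (apply_gate (CNOTg c t) \<psi>) d"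
    by (rule has_weyl_subspace_clifford[where G = "apply_gate (CNOTg c t)",
          OF linear_cnot_symplectic inj_cnot_symplectic[OF \<open>c \<noteq> t\<close>]
          weyl_op_cnot[OF \<open>c \<noteq> t\<close>] _ apply_gate_uminus assms(2)]) simp
  with CNOTg show ?thesis by simp
next
  case (Ug j U)
  with has_weyl_subspace_Ug[OF assms(2)] show ?thesis by simp
qed

lemma has_weyl_subspace_foldl:
  assumes "\<forall>g\<in>set gs. valid_gate g" "has_weyl_subspace \<psi> d"
  shows "has_weyl_subspace (foldl (\<lambda>\<psi> g. apply_gate g \<psi>) \<psi> gs)
    (d - 2 * length (filter is_nonclifford_slot gs))"
  using assms
proof (induction gs arbitrary: \<psi> d)
  case Nil
  then show ?case by simp
next
  case (Cons g gs)
  then have step: "has_weyl_subspace (apply_gate g \<psi>) (d - (if is_nonclifford_slot g then 2 else 0))"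
    by (simp add: has_weyl_subspace_apply_gate)
  have "\<forall>g\<in>set gs. valid_gate g"
    using Cons.prems(1) by simp
  from Cons.IH[OF this step] show ?case
    by (cases "is_nonclifford_slot g") simp_all
qed

theorem lemma4p2:
  fixes gs :: "('n::finite) gate list" and t :: nat
  assumes "t_doped_clifford t gs"
  shows "stab_dim (run_circuit gs) \<ge> CARD('n) - 2 * t"
proof -
  have valid: "\<forall>g\<in>set gs. valid_gate g" and count: "length (filter is_nonclifford_slot gs) \<le> t"
    using assms by (auto simp: t_doped_clifford_def)
  have "has_weyl_subspace (run_circuit gs) (CARD('n) - 2 * length (filter is_nonclifford_slot gs))"
    unfolding run_circuit_def by (rule has_weyl_subspace_foldl[OF valid has_weyl_subspace_zero_state])
  then have "CARD('n) - 2 * length (filter is_nonclifford_slot gs) \<le> stab_dim (run_circuit gs)"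
    by (rule stab_dim_ge_if_has_weyl_subspace)
  with count show ?thesis by linarith
qed

end
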